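(* Let $\mathbf F$ be an oriented edge-incidence matrix for an unweighted connected undirected graph $G=(V,\mathcal E)$ without self-loops. Then $\|\mathbf F^\dagger\|_{\max}\le1$.
   Context: For an unweighted graph the adjacency matrix $\boldsymbol\Phi$ has entries in $\{0,1\}$. An oriented edge-incidence matrix $\mathbf F\in\mathbb R^{n\times|\mathcal E|}$ has, for each edge between nodes $j$ and $k$, a column with entry $\sqrt{\Phi_{jk}}=1$ in row $j$, $-1$ in row $k$, and zeros elsewhere. $\mathbf F^\dagger$ is the Moore–Penrose pseudoinverse and $\|\cdot\|_{\max}$ the maximum absolute entry. *)

theory Defs
  imports "Jordan_Normal_Form.Matrix"
begin

text \<open>Oriented edge-incidence matrix: vertices are 0..<n, the edges are given as a list
  of oriented pairs (j,k); column c has +1 in row j and -1 in row k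
  (here sqrt(Phi_jk) = 1 since the graph is unweighted).\<close>
definition incidence_mat :: "nat \<Rightarrow> (nat \<times> nat) list \<Rightarrow> real mat" where
  "incidence_mat n es = mat n (length es)
     (\<lambda>(i, c). if i = fst (es ! c) then 1 else if i = snd (es ! c) then -1 else 0)"

definition is_orientation :: "nat \<Rightarrow> (nat \<Rightarrow> nat \<Rightarrow> bool) \<Rightarrow> (nat \<times> nat) list \<Rightarrow> bool" where
  "is_orientation n Adj es \<longleftrightarrow>
     distinct (map (\<lambda>(j, k). {j, k}) es) \<and>
     set (map (\<lambda>(j, k). {j, k}) es) = {{j, k} | j k. j < n \<and> k < n \<and> Adj j k}"

definition is_pinv :: "real mat \<Rightarrow> real mat \<Rightarrow> bool" where
  "is_pinv A X \<longleftrightarrow> X \<in> carrier_mat (dim_col A) (dim_row A) \<and>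
     A * X * A = A \<and> X * A * X = X \<and>
     transpose_mat (A * X) = A * X \<and> transpose_mat (X * A) = X * A"

definition pinv :: "real mat \<Rightarrow> real mat" where
  "pinv A = (THE X. is_pinv A X)"

definition max_abs_le :: "real mat \<Rightarrow> real \<Rightarrow> bool" where
  "max_abs_le A c \<longleftrightarrow> (\<forall>i < dim_row A. \<forall>j < dim_col A. \<bar>A $$ (i, j)\<bar> \<le> c)"

end

theory Submission
  imports Defs "Jordan_Normal_Form.Determinant"
begin

text \<open>For a connected graph with Laplacian \<open>L = F F\<^sup>T\<close>, the matrix \<open>L + J/n\<close>
  (\<open>J\<close> the all-ones matrix) is invertible with a symmetric inverse \<open>M\<close>, and
  \<open>X = F\<^sup>T M\<close> satisfies the Penrose equations because \<open>F X = I - J/n\<close>.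
  Column \<open>v\<close> of \<open>X\<close> lists the potential differences along the edges of \<open>\<phi> = M e\<^sub>v\<close>,
  which solves \<open>L \<phi> = e\<^sub>v - 1/n\<close>: a unit current enters at \<open>v\<close> and leaves uniformly.
  Cutting the graph at the potential of the higher endpoint of an edge, every edge crossing
  the cut carries a nonnegative current, and their total is the net current entering the
  upper side, which is at most 1.\<close>

lemma index_mult_mat_sum:
  assumes "A \<in> carrier_mat r k" "B \<in> carrier_mat k c" "i < r" "j < c"
  shows "(A * B) $$ (i, j) = (\<Sum>l<k. A $$ (i, l) * B $$ (l, j))"
  using assms by (auto simp: scalar_prod_def lessThan_atLeast0 intro!: sum.cong)

lemma is_pinv_transpose_absorb:
  assumes "is_pinv A X"
  shows "transpose_mat A * (A * X) = transpose_mat A"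
    and "X * A * transpose_mat A = transpose_mat A"
proof -
  obtain r c where A: "A \<in> carrier_mat r c" by blast
  have X: "X \<in> carrier_mat c r" using assms A unfolding is_pinv_def by auto
  note P = assms[unfolded is_pinv_def]
  have "transpose_mat A * (A * X) = transpose_mat A * transpose_mat (A * X)"
    using P by simp
  also have "\<dots> = transpose_mat (A * X * A)"
    using A X by (simp only: transpose_mult[of "A * X" r r A c] mult_carrier_mat)
  finally show "transpose_mat A * (A * X) = transpose_mat A"
    using P by simp
  have "X * A * transpose_mat A = transpose_mat (X * A) * transpose_mat A"
    using P by simp
  also have "\<dots> = transpose_mat (A * (X * A))"
    using A X by (simp only: transpose_mult[of A r c "X * A" c] mult_carrier_mat)
  finally show "X * A * transpose_mat A = transpose_mat A"
    using P A X by simp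
qed

lemma is_pinv_unique:
  assumes X: "is_pinv A X" and Y: "is_pinv A Y"
  shows "X = Y"
proof -
  obtain r c where A: "A \<in> carrier_mat r c" by blast
  have Xc: "X \<in> carrier_mat c r" and Yc: "Y \<in> carrier_mat c r"
    using X Y A unfolding is_pinv_def by auto
  have tr: "transpose_mat A \<in> carrier_mat c r" "transpose_mat X \<in> carrier_mat r c"
    "transpose_mat Y \<in> carrier_mat r c"
    using A Xc Yc by auto
  note PX = X[unfolded is_pinv_def] and PY = Y[unfolded is_pinv_def]
  have XT: "transpose_mat X * transpose_mat A = A * X"
    using PX A Xc by (simp add: transpose_mult[of A r c X r, symmetric])
  have YT: "transpose_mat A * transpose_mat Y = Y * A"
    using PY A Yc by (simp add: transpose_mult[of Y c r A c, symmetric])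
  have "X = X * (transpose_mat X * transpose_mat A)"
    using PX A Xc XT by simp
  also have "\<dots> = X * (transpose_mat X * (transpose_mat A * (A * Y)))"
    by (simp only: is_pinv_transpose_absorb(1)[OF Y])
  also have "\<dots> = X * (transpose_mat X * transpose_mat A * (A * Y))"
    by (subst assoc_mult_mat[OF tr(2) tr(1)]) (use A Yc in auto)
  also have "\<dots> = X * (A * X) * (A * Y)"
    using A Xc Yc by (simp only: XT) (simp add: assoc_mult_mat[of X c r "A * X" r "A * Y" r])
  also have "\<dots> = X * (A * Y)"
    using PX A Xc by simp
  finally have XAY: "X = X * (A * Y)" .
  have "Y = transpose_mat A * transpose_mat Y * Y"
    using PY A Yc YT by simp
  also have "\<dots> = X * A * transpose_mat A * transpose_mat Y * Y"
    by (simp only: is_pinv_transpose_absorb(2)[OF X])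
  also have "\<dots> = X * A * (transpose_mat A * transpose_mat Y) * Y"
    by (subst assoc_mult_mat[of "X * A" c c _ r _ c]) (use A Xc Yc in auto)
  also have "\<dots> = X * A * (Y * A * Y)"
    using A Xc Yc by (simp only: YT) (simp add: assoc_mult_mat[of "X * A" c c "Y * A" c Y r])
  finally have "Y = X * A * Y"
    using PY by simp
  with XAY show ?thesis
    using assoc_mult_mat[OF Xc A Yc] by simp
qed

lemma pinv_eqI: "is_pinv A X \<Longrightarrow> pinv A = X"
  unfolding pinv_def using is_pinv_unique by blast

lemma trivial_kernel_imp_right_inverse:
  fixes A :: "'a :: field mat"
  assumes A: "A \<in> carrier_mat n n"
    and kernel: "\<And>x. x \<in> carrier_vec n \<Longrightarrow> A *\<^sub>v x = 0\<^sub>v n \<Longrightarrow> x = 0\<^sub>v n"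
  shows "\<exists>M. M \<in> carrier_mat n n \<and> A * M = 1\<^sub>m n"
proof -
  have "det A \<noteq> 0"
    using kernel det_0_iff_vec_prod_zero_field[OF A] by blast
  then have "A \<in> Units (ring_mat TYPE('a) n ())"
    by (rule det_non_zero_imp_unit[OF A])
  then show ?thesis
    by (auto simp: Units_def ring_mat_def)
qed

lemma right_inverse_of_symmetric_mat_symmetric:
  fixes A M :: "'a :: comm_ring_1 mat"
  assumes A: "A \<in> carrier_mat n n" and M: "M \<in> carrier_mat n n"
    and sym: "transpose_mat A = A" and AM: "A * M = 1\<^sub>m n"
  shows "transpose_mat M = M"
proof -
  have MA: "transpose_mat M * A = 1\<^sub>m n"
    using transpose_mult[OF A M] AM sym by simp
  have "transpose_mat M = transpose_mat M * (A * M)"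
    using AM M by simp
  also have "\<dots> = transpose_mat M * A * M"
    using A M by simp
  finally show ?thesis
    using MA M by simp
qed

definition centering_mat :: "nat \<Rightarrow> real mat" where
  "centering_mat n = mat n n (\<lambda>(i, j). of_bool (i = j) - 1 / real n)"

lemma centering_mat_carrier: "centering_mat n \<in> carrier_mat n n"
  by (simp add: centering_mat_def)

lemma transpose_centering_mat: "transpose_mat (centering_mat n) = centering_mat n"
  by (rule eq_matI) (auto simp: centering_mat_def)

lemma centering_mat_mult_zero_col_sums:
  assumes A: "A \<in> carrier_mat n k" and sums: "\<And>j. j < k \<Longrightarrow> (\<Sum>i<n. A $$ (i, j)) = 0"
  shows "centering_mat n * A = A"
proof (rule eq_matI)
  fix i j assume "i < dim_row A" "j < dim_col A"
  then have ij: "i < n" "j < k" using A by auto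
  have "(centering_mat n * A) $$ (i, j) = (\<Sum>l<n. (of_bool (i = l) - 1 / real n) * A $$ (l, j))"
    using ij by (subst index_mult_mat_sum[OF centering_mat_carrier A]) (auto simp: centering_mat_def)
  also have "\<dots> = A $$ (i, j) - (\<Sum>l<n. A $$ (l, j)) / real n"
    using ij by (simp add: left_diff_distrib sum_subtractf sum_divide_distrib)
  finally show "(centering_mat n * A) $$ (i, j) = A $$ (i, j)"
    using sums ij by simp
qed (use A in \<open>auto simp: centering_mat_def\<close>)

lemma mult_centering_mat_zero_row_sums:
  assumes B: "B \<in> carrier_mat k n" and sums: "\<And>i. i < k \<Longrightarrow> (\<Sum>j<n. B $$ (i, j)) = 0"
  shows "B * centering_mat n = B"
proof -
  have "centering_mat n * transpose_mat B = transpose_mat B"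
    by (rule centering_mat_mult_zero_col_sums) (use B sums in auto)
  moreover have "transpose_mat (B * centering_mat n) = centering_mat n * transpose_mat B"
    using B by (simp add: transpose_mult[OF B centering_mat_carrier] transpose_centering_mat)
  ultimately show ?thesis
    by (metis transpose_transpose)
qed

locale connected_incidence =
  fixes n :: nat and es :: "(nat \<times> nat) list"
  assumes edge_ends: "\<And>j k. (j, k) \<in> set es \<Longrightarrow> j < n \<and> k < n \<and> j \<noteq> k"
    and edge_constant_imp_constant:
      "\<And>(x :: nat \<Rightarrow> real) j k.
        (\<forall>(a, b) \<in> set es. x a = x b) \<Longrightarrow> j < n \<Longrightarrow> k < n \<Longrightarrow> x j = x k"
begin

abbreviation "F \<equiv> incidence_mat n es"
abbreviation "m \<equiv> length es"
abbreviation "src e \<equiv> fst (es ! e)"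
abbreviation "dst e \<equiv> snd (es ! e)"

lemma incidence_carrier: "F \<in> carrier_mat n m"
  by (simp add: incidence_mat_def)

lemma incidence_entry:
  "u < n \<Longrightarrow> e < m \<Longrightarrow> F $$ (u, e) = (if u = src e then 1 else if u = dst e then -1 else 0)"
  by (simp add: incidence_mat_def)

lemma edge_ends_nth: "e < m \<Longrightarrow> src e < n \<and> dst e < n \<and> src e \<noteq> dst e"
  using edge_ends[of "src e" "dst e"] by simp

lemma incidence_col_sum:
  assumes e: "e < m"
  shows "(\<Sum>u<n. F $$ (u, e) * h u) = h (src e) - h (dst e)"
proof -
  have "(\<Sum>u<n. F $$ (u, e) * h u) = (\<Sum>u<n. of_bool (u = src e) * h u - of_bool (u = dst e) * h u)"
    by (rule sum.cong) (use edge_ends_nth[OF e] in \<open>auto simp: incidence_entry e\<close>)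
  also have "\<dots> = h (src e) - h (dst e)"
    using edge_ends_nth[OF e] by (simp add: sum_subtractf)
  finally show ?thesis .
qed

lemma incidence_sum_swap:
  "(\<Sum>i<n. y i * (\<Sum>e<m. F $$ (i, e) * z e)) = (\<Sum>e<m. z e * (y (src e) - y (dst e)))"
proof -
  have "(\<Sum>i<n. y i * (\<Sum>e<m. F $$ (i, e) * z e)) = (\<Sum>e<m. z e * (\<Sum>i<n. F $$ (i, e) * y i))"
    by (simp add: sum_distrib_left sum_distrib_right mult_ac sum.swap[of _ "{..<m}"])
  also have "\<dots> = (\<Sum>e<m. z e * (y (src e) - y (dst e)))"
    by (simp add: incidence_col_sum)
  finally show ?thesis .
qed

abbreviation "L \<equiv> F * transpose_mat F"

lemma laplacian_carrier: "L \<in> carrier_mat n n"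
  using incidence_carrier by auto

lemma laplacian_entry: "i < n \<Longrightarrow> j < n \<Longrightarrow> L $$ (i, j) = (\<Sum>e<m. F $$ (i, e) * F $$ (j, e))"
  using incidence_carrier by (subst index_mult_mat_sum[of F n m "transpose_mat F" n]) auto

lemma laplacian_apply:
  assumes "i < n"
  shows "(\<Sum>j<n. L $$ (i, j) * x j) = (\<Sum>e<m. F $$ (i, e) * (x (src e) - x (dst e)))"
proof -
  have "(\<Sum>j<n. L $$ (i, j) * x j) = (\<Sum>e<m. F $$ (i, e) * (\<Sum>j<n. F $$ (j, e) * x j))"
    using assms by (simp add: laplacian_entry sum_distrib_left sum_distrib_right mult_ac
        sum.swap[of _ "{..<m}"])
  also have "\<dots> = (\<Sum>e<m. F $$ (i, e) * (x (src e) - x (dst e)))"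
    by (simp add: incidence_col_sum)
  finally show ?thesis .
qed

lemma laplacian_col_sum: "j < n \<Longrightarrow> (\<Sum>i<n. L $$ (i, j)) = 0"
  using incidence_sum_swap[of "\<lambda>_. 1" "\<lambda>e. F $$ (j, e)"]
  by (simp add: laplacian_entry mult.commute)

lemma laplacian_potential_edge_bound:
  assumes pot: "\<And>i. i < n \<Longrightarrow> (\<Sum>j<n. L $$ (i, j) * \<phi> j) = of_bool (i = v) - 1 / real n"
    and e: "e < m"
  shows "\<bar>\<phi> (src e) - \<phi> (dst e)\<bar> \<le> 1"
proof -
  \<comment> \<open>\<open>S\<close> is the upper side of the cut at the higher endpoint of \<open>e\<close>. Every edge
    crosses it downhill, and the total current across it is \<open>of_bool (v \<in> S) - |S|/n\<close>.\<close>
  define S where "S = {u. max (\<phi> (src e)) (\<phi> (dst e)) \<le> \<phi> u}"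
  define cut where
    "cut f = (\<phi> (src f) - \<phi> (dst f)) * (of_bool (src f \<in> S) - of_bool (dst f \<in> S))" for f
  have cut_nonneg: "0 \<le> cut f" for f
    by (auto simp: cut_def S_def)
  have "\<bar>\<phi> (src e) - \<phi> (dst e)\<bar> = cut e"
    by (auto simp: cut_def S_def)
  also have "\<dots> \<le> (\<Sum>f<m. cut f)"
    using e cut_nonneg by (intro member_le_sum) auto
  also have "\<dots> = (\<Sum>i<n. of_bool (i \<in> S) * (\<Sum>j<n. L $$ (i, j) * \<phi> j))"
    by (simp add: cut_def incidence_sum_swap laplacian_apply)
  also have "\<dots> \<le> (\<Sum>i<n. of_bool (i = v))"
    using pot by (intro sum_mono) auto
  also have "\<dots> \<le> 1"
    using card_mono[of "{v}" "{..<n} \<inter> {v}"] by simp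
  finally show ?thesis .
qed

definition reg_laplacian :: "real mat" where
  "reg_laplacian = L + mat n n (\<lambda>_. 1 / real n)"

lemma reg_laplacian_carrier: "reg_laplacian \<in> carrier_mat n n"
  using incidence_carrier by (simp add: reg_laplacian_def)

lemma reg_laplacian_entry: "i < n \<Longrightarrow> j < n \<Longrightarrow> reg_laplacian $$ (i, j) = L $$ (i, j) + 1 / real n"
  using incidence_carrier by (simp add: reg_laplacian_def)

lemma reg_laplacian_symmetric: "transpose_mat reg_laplacian = reg_laplacian"
  by (rule eq_matI)
    (use reg_laplacian_carrier in \<open>auto simp: reg_laplacian_entry laplacian_entry mult.commute\<close>)

lemma reg_laplacian_col_sum: "j < n \<Longrightarrow> (\<Sum>i<n. reg_laplacian $$ (i, j)) = 1"
  by (simp add: reg_laplacian_entry sum.distrib laplacian_col_sum)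

lemma reg_laplacian_kernel:
  assumes zero: "\<And>i. i < n \<Longrightarrow> (\<Sum>j<n. reg_laplacian $$ (i, j) * x j) = 0" and k: "k < n"
  shows "x k = 0"
proof -
  define s where "s = (\<Sum>j<n. x j)"
  have "s = (\<Sum>j<n. x j * (\<Sum>i<n. reg_laplacian $$ (i, j)))"
    by (simp add: s_def reg_laplacian_col_sum)
  also have "\<dots> = (\<Sum>i<n. \<Sum>j<n. reg_laplacian $$ (i, j) * x j)"
    by (subst sum.swap) (simp add: sum_distrib_left mult.commute)
  finally have s0: "s = 0"
    using zero by simp
  have harmonic: "(\<Sum>e<m. F $$ (i, e) * (x (src e) - x (dst e))) = 0" if "i < n" for i
  proof -
    have "(\<Sum>j<n. reg_laplacian $$ (i, j) * x j) = (\<Sum>j<n. L $$ (i, j) * x j) + s / real n"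
      using that by (simp add: reg_laplacian_entry distrib_right sum.distrib s_def sum_divide_distrib)
    then show ?thesis
      using zero[OF that] s0 that by (simp add: laplacian_apply)
  qed
  have "(\<Sum>e<m. (x (src e) - x (dst e))\<^sup>2)
      = (\<Sum>i<n. x i * (\<Sum>e<m. F $$ (i, e) * (x (src e) - x (dst e))))"
    by (simp add: incidence_sum_swap power2_eq_square)
  also have "\<dots> = 0"
    by (simp add: harmonic)
  finally have "\<forall>e<m. x (src e) = x (dst e)"
    by (simp add: sum_nonneg_eq_0_iff)
  then have "\<forall>(a, b) \<in> set es. x a = x b"
    by (auto simp: in_set_conv_nth) (metis fst_conv snd_conv)
  then have "x j = x k" if "j < n" for j
    using edge_constant_imp_constant that k by blast
  then have "s = real n * x k"
    unfolding s_def by simp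
  then show ?thesis
    using s0 k by simp
qed

definition reg_laplacian_inv :: "real mat" where
  "reg_laplacian_inv = (SOME M. M \<in> carrier_mat n n \<and> reg_laplacian * M = 1\<^sub>m n)"

lemma reg_laplacian_inv_carrier: "reg_laplacian_inv \<in> carrier_mat n n"
  and reg_laplacian_mult_inv: "reg_laplacian * reg_laplacian_inv = 1\<^sub>m n"
proof -
  have "\<exists>M. M \<in> carrier_mat n n \<and> reg_laplacian * M = 1\<^sub>m n"
  proof (rule trivial_kernel_imp_right_inverse[OF reg_laplacian_carrier])
    fix x :: "real vec" assume x: "x \<in> carrier_vec n" and "reg_laplacian *\<^sub>v x = 0\<^sub>v n"
    have "(\<Sum>j<n. reg_laplacian $$ (i, j) * x $ j) = (reg_laplacian *\<^sub>v x) $ i" if "i < n" for i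
      using that x reg_laplacian_carrier
      by (auto simp: scalar_prod_def lessThan_atLeast0 intro!: sum.cong)
    then show "x = 0\<^sub>v n"
      using x \<open>reg_laplacian *\<^sub>v x = 0\<^sub>v n\<close> reg_laplacian_kernel[of "\<lambda>j. x $ j"]
      by (intro eq_vecI) auto
  qed
  then show "reg_laplacian_inv \<in> carrier_mat n n" "reg_laplacian * reg_laplacian_inv = 1\<^sub>m n"
    unfolding reg_laplacian_inv_def by (metis (mono_tags, lifting) someI_ex)+
qed

lemma reg_laplacian_inv_symmetric: "transpose_mat reg_laplacian_inv = reg_laplacian_inv"
  using right_inverse_of_symmetric_mat_symmetric[OF reg_laplacian_carrier reg_laplacian_inv_carrier
      reg_laplacian_symmetric reg_laplacian_mult_inv] .

lemma reg_laplacian_inv_col_sum: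
  assumes j: "j < n"
  shows "(\<Sum>k<n. reg_laplacian_inv $$ (k, j)) = 1"
proof -
  have "(\<Sum>k<n. reg_laplacian_inv $$ (k, j))
      = (\<Sum>k<n. (\<Sum>i<n. reg_laplacian $$ (i, k)) * reg_laplacian_inv $$ (k, j))"
    by (simp add: reg_laplacian_col_sum)
  also have "\<dots> = (\<Sum>i<n. \<Sum>k<n. reg_laplacian $$ (i, k) * reg_laplacian_inv $$ (k, j))"
    by (subst sum.swap) (simp add: sum_distrib_right)
  also have "\<dots> = (\<Sum>i<n. (reg_laplacian * reg_laplacian_inv) $$ (i, j))"
    using j by (intro sum.cong)
      (simp_all add: index_mult_mat_sum[OF reg_laplacian_carrier reg_laplacian_inv_carrier])
  also have "\<dots> = 1"
    using j by (simp add: reg_laplacian_mult_inv)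
  finally show ?thesis .
qed

lemma reg_laplacian_inv_row_sum: "i < n \<Longrightarrow> (\<Sum>k<n. reg_laplacian_inv $$ (i, k)) = 1"
  using reg_laplacian_inv_col_sum reg_laplacian_inv_carrier
  by (subst (asm) reg_laplacian_inv_symmetric[symmetric]) auto

lemma laplacian_mult_reg_laplacian_inv: "L * reg_laplacian_inv = centering_mat n"
proof (rule eq_matI)
  fix i j assume "i < dim_row (centering_mat n)" "j < dim_col (centering_mat n)"
  then have ij: "i < n" "j < n" by (auto simp: centering_mat_def)
  have "(L * reg_laplacian_inv) $$ (i, j) = (\<Sum>k<n. L $$ (i, k) * reg_laplacian_inv $$ (k, j))"
    using ij by (simp add: index_mult_mat_sum[OF laplacian_carrier reg_laplacian_inv_carrier])
  also have "\<dots> = (\<Sum>k<n. reg_laplacian $$ (i, k) * reg_laplacian_inv $$ (k, j))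
      - (\<Sum>k<n. reg_laplacian_inv $$ (k, j)) / real n"
    using ij by (simp add: reg_laplacian_entry algebra_simps sum_subtractf sum.distrib sum_divide_distrib)
  also have "\<dots> = of_bool (i = j) - 1 / real n"
    using ij by (simp add: reg_laplacian_inv_col_sum reg_laplacian_mult_inv
        flip: index_mult_mat_sum[OF reg_laplacian_carrier reg_laplacian_inv_carrier])
  finally show "(L * reg_laplacian_inv) $$ (i, j) = centering_mat n $$ (i, j)"
    using ij by (simp add: centering_mat_def)
qed (use reg_laplacian_inv_carrier incidence_carrier in \<open>auto simp: centering_mat_def\<close>)

definition incidence_pinv :: "real mat" where
  "incidence_pinv = transpose_mat F * reg_laplacian_inv"

lemma incidence_pinv_carrier: "incidence_pinv \<in> carrier_mat m n"
  using incidence_carrier reg_laplacian_inv_carrier by (simp add: incidence_pinv_def)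

lemma incidence_pinv_entry:
  assumes "e < m" "v < n"
  shows "incidence_pinv $$ (e, v) = reg_laplacian_inv $$ (src e, v) - reg_laplacian_inv $$ (dst e, v)"
proof -
  have "incidence_pinv $$ (e, v) = (\<Sum>u<n. F $$ (u, e) * reg_laplacian_inv $$ (u, v))"
    unfolding incidence_pinv_def using assms incidence_carrier
    by (subst index_mult_mat_sum[of _ m n _ n]) (auto intro: reg_laplacian_inv_carrier)
  then show ?thesis
    using assms by (simp add: incidence_col_sum)
qed

lemma incidence_mult_pinv: "F * incidence_pinv = centering_mat n"
  using incidence_carrier reg_laplacian_inv_carrier
  by (simp add: incidence_pinv_def laplacian_mult_reg_laplacian_inv
      flip: assoc_mult_mat[of F n m "transpose_mat F" n reg_laplacian_inv n])

lemma is_pinv_incidence_pinv: "is_pinv F incidence_pinv"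
proof -
  have FXF: "F * incidence_pinv * F = F"
    unfolding incidence_mult_pinv
    by (rule centering_mat_mult_zero_col_sums[OF incidence_carrier])
      (use incidence_col_sum[of _ "\<lambda>_. 1"] in simp)
  have XFX: "incidence_pinv * F * incidence_pinv = incidence_pinv"
  proof -
    have "incidence_pinv * F * incidence_pinv = incidence_pinv * centering_mat n"
      using incidence_carrier incidence_pinv_carrier by (simp add: incidence_mult_pinv)
    also have "\<dots> = incidence_pinv"
      by (rule mult_centering_mat_zero_row_sums[OF incidence_pinv_carrier])
        (simp add: incidence_pinv_entry sum_subtractf reg_laplacian_inv_row_sum edge_ends_nth)
    finally show ?thesis .
  qed
  have "transpose_mat incidence_pinv = reg_laplacian_inv * F"
    using incidence_carrier reg_laplacian_inv_carrier unfolding incidence_pinv_def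
    by (simp add: transpose_mult[of "transpose_mat F" m n reg_laplacian_inv n] reg_laplacian_inv_symmetric)
  then have "transpose_mat (incidence_pinv * F) = transpose_mat F * (reg_laplacian_inv * F)"
    using transpose_mult[OF incidence_pinv_carrier incidence_carrier] by simp
  then have XF: "transpose_mat (incidence_pinv * F) = incidence_pinv * F"
    using incidence_carrier reg_laplacian_inv_carrier by (simp add: incidence_pinv_def)
  show ?thesis
    unfolding is_pinv_def
    using FXF XFX XF incidence_pinv_carrier incidence_carrier
    by (simp add: incidence_mult_pinv transpose_centering_mat)
qed

lemma incidence_pinv_abs_le_1:
  assumes e: "e < m" and v: "v < n"
  shows "\<bar>incidence_pinv $$ (e, v)\<bar> \<le> 1"
proof -
  have "(\<Sum>j<n. L $$ (i, j) * reg_laplacian_inv $$ (j, v)) = of_bool (i = v) - 1 / real n"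
    if "i < n" for i
    using that v arg_cong[OF laplacian_mult_reg_laplacian_inv, of "\<lambda>A. A $$ (i, v)"]
    by (simp add: index_mult_mat_sum[OF laplacian_carrier reg_laplacian_inv_carrier] centering_mat_def)
  then have "\<bar>reg_laplacian_inv $$ (src e, v) - reg_laplacian_inv $$ (dst e, v)\<bar> \<le> 1"
    by (rule laplacian_potential_edge_bound[OF _ e])
  then show ?thesis
    using e v by (simp add: incidence_pinv_entry)
qed

lemma max_abs_le_pinv_incidence: "max_abs_le (pinv F) 1"
  using incidence_pinv_carrier incidence_pinv_abs_le_1
  by (simp add: pinv_eqI[OF is_pinv_incidence_pinv] max_abs_le_def)

end

lemma is_orientation_edge_ends:
  assumes orient: "is_orientation n Adj es" and no_loops: "\<And>j. \<not> Adj j j"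
    and edge: "(j, k) \<in> set es"
  shows "j < n \<and> k < n \<and> j \<noteq> k"
proof -
  have "{j, k} \<in> set (map (\<lambda>(j, k). {j, k}) es)"
    using edge by force
  then obtain a b where "{j, k} = {a, b}" "a < n" "b < n" "Adj a b"
    using orient by (auto simp: is_orientation_def)
  then show ?thesis
    using no_loops by (auto simp: doubleton_eq_iff)
qed

lemma is_orientation_edge_constant_imp_constant:
  assumes orient: "is_orientation n Adj es"
    and connected: "(\<lambda>a b. a < n \<and> b < n \<and> Adj a b)\<^sup>*\<^sup>* j k"
    and edge_constant: "\<forall>(a, b) \<in> set es. x a = x b"
  shows "x j = x k"
  using connected
proof (induction rule: rtranclp_induct)
  case (step a b)
  then have "{a, b} \<in> set (map (\<lambda>(j, k). {j, k}) es)"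
    using orient by (auto simp: is_orientation_def)
  then obtain a' b' where "(a', b') \<in> set es" "{a', b'} = {a, b}"
    by auto
  then have "x a = x b"
    using edge_constant by (auto simp: doubleton_eq_iff)
  with step show ?case
    by simp
qed simp

theorem lemmaA4:
  fixes n :: nat and Adj :: "nat \<Rightarrow> nat \<Rightarrow> bool" and es :: "(nat \<times> nat) list"
  assumes sym: "\<And>j k. Adj j k \<Longrightarrow> Adj k j"
    and no_loops: "\<And>j. \<not> Adj j j"
    and connected: "\<And>j k. j < n \<Longrightarrow> k < n \<Longrightarrow>
        (\<lambda>a b. a < n \<and> b < n \<and> Adj a b)\<^sup>*\<^sup>* j k"
    and orient: "is_orientation n Adj es"
  shows "max_abs_le (pinv (incidence_mat n es)) 1"
proof -
  interpret connected_incidence n es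
  proof
    show "j < n \<and> k < n \<and> j \<noteq> k" if "(j, k) \<in> set es" for j k
      using is_orientation_edge_ends[OF orient no_loops that] .
    show "x j = x k" if "\<forall>(a, b) \<in> set es. x a = x b" "j < n" "k < n"
      for x :: "nat \<Rightarrow> real" and j k
      using is_orientation_edge_constant_imp_constant[OF orient connected[OF that(2,3)] that(1)] .
  qed
  show ?thesis
    by (rule max_abs_le_pinv_incidence)
qed

end
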